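(* Let $d,\alpha>1$, let $k\le n$ be integers, and fix a constant $\beta\ge1$. There is a random linear map $G:\mathbb{R}^d\to\mathbb{R}^t$ with $t=O(\log k+\tfrac{d}{\alpha^2})$ (hidden constant may depend on $\beta$) such that for every two sets $P\subset\mathbb{R}^d$ of size $n$ and $Q\subset\mathbb{R}^d$ of size $k$, with probability at least $2/3$: (1) $FPQ_k(G(P),G(Q))$ is an $O(\alpha)$-estimation of $FPQ_k(P,Q)$; and (2) every $p\in P$ is an $O(\alpha)$-approximate solution for $FPQ_k(P,Q)$ whenever $Gp$ is a $\beta$-approximate solution for $FPQ_k(G(P),G(Q))$.
   Context: Euclidean norms; $\mathrm{dist}(x,Q)=\min_{q\in Q}\|x-q\|$. For a data set $P$ and query set $Q$ with $|Q|\le k$, $FPQ_k(P,Q)=\max_{p\in P}\mathrm{dist}(p,Q)$ (furthest point query). A point $p\in P$ is a $\gamma$-approximate solution for $FPQ_k(P,Q)$ if $\mathrm{dist}(p,Q)\ge\frac1\gamma FPQ_k(P,Q)$. A number $y$ is a $\gamma$-estimation of $x\ge0$ if $x\le y\le\gamma x$. $G(X)=\{Gx:x\in X\}$. *)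

theory Defs
  imports "HOL-Probability.Probability"
begin

text \<open>Vectors of R^d are represented as functions nat => real vanishing at
  coordinates >= d (the dimension d, and the target dimension t, vary inside
  the statement, so they cannot be type indices).\<close>

definition in_dim :: "nat \<Rightarrow> (nat \<Rightarrow> real) \<Rightarrow> bool" where
  "in_dim d x \<longleftrightarrow> (\<forall>j\<ge>d. x j = 0)"

definition edist :: "nat \<Rightarrow> (nat \<Rightarrow> real) \<Rightarrow> (nat \<Rightarrow> real) \<Rightarrow> real" where
  "edist d x y = sqrt (\<Sum>j<d. (x j - y j)^2)"

definition dist_set :: "nat \<Rightarrow> (nat \<Rightarrow> real) \<Rightarrow> (nat \<Rightarrow> real) set \<Rightarrow> real" where
  "dist_set d x Q = Min (edist d x ` Q)"

definition FPQ :: "nat \<Rightarrow> (nat \<Rightarrow> real) set \<Rightarrow> (nat \<Rightarrow> real) set \<Rightarrow> real" where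
  "FPQ d P Q = Max ((\<lambda>p. dist_set d p Q) ` P)"

definition approx_sol :: "nat \<Rightarrow> real \<Rightarrow> (nat \<Rightarrow> real) set \<Rightarrow> (nat \<Rightarrow> real) set
    \<Rightarrow> (nat \<Rightarrow> real) \<Rightarrow> bool" where
  "approx_sol d \<gamma> P Q p \<longleftrightarrow> p \<in> P \<and> dist_set d p Q \<ge> FPQ d P Q / \<gamma>"

definition estimation :: "real \<Rightarrow> real \<Rightarrow> real \<Rightarrow> bool" where
  "estimation \<gamma> x y \<longleftrightarrow> x \<le> y \<and> y \<le> \<gamma> * x"

definition mat_apply :: "nat \<Rightarrow> nat \<Rightarrow> (nat \<Rightarrow> nat \<Rightarrow> real) \<Rightarrow> (nat \<Rightarrow> real) \<Rightarrow> (nat \<Rightarrow> real)" where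
  "mat_apply t d M x = (\<lambda>i. if i < t then (\<Sum>j<d. M i j * x j) else 0)"

end

theory Submission
  imports Defs
begin

(* The projection is G = sqrt (2 / t) R for a t x d matrix R of independent random signs.
   Fix P and Q, and let p0 be the point of P furthest from Q.

   The bilinear form y R x is subgaussian with variance proxy |y|^2 |x|^2, and a 1/4-net of the
   unit ball of R^n has only e^(O(n)) points; a union bound over the net shows that R has operator
   norm O(sqrt (t + d)) with probability 9/10. As t >= d / alpha^2, G then stretches every
   distance by at most O(alpha).

   For a fixed vector v, |R v|^2 < t |v|^2 / 2 has probability at most exp (- t / 48), so with
   t >= 48 ln (10 k) a union bound over the k vectors p0 - q shows that, with probability 9/10,
   G shrinks none of the distances from p0 to Q.

   These two properties of G alone imply both claims: the furthest distance can only grow, by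
   non-contraction at p0, and by at most O(alpha), by the expansion bound; and a point whose image
   is a beta-approximate solution loses at most the same factor. *)

definition sqnorm :: "nat \<Rightarrow> (nat \<Rightarrow> real) \<Rightarrow> real" where
  "sqnorm n x = (\<Sum>j<n. (x j)\<^sup>2)"

definition bilinear ::
    "nat \<Rightarrow> nat \<Rightarrow> (nat \<Rightarrow> nat \<Rightarrow> real) \<Rightarrow> (nat \<Rightarrow> real) \<Rightarrow> (nat \<Rightarrow> real) \<Rightarrow> real" where
  "bilinear t d R y x = (\<Sum>i<t. y i * (\<Sum>j<d. R i j * x j))"

lemma sqnorm_nonneg [simp]: "sqnorm n x \<ge> 0"
  unfolding sqnorm_def by (intro sum_nonneg) auto

lemma sqnorm_zero [simp]: "sqnorm n (\<lambda>_. 0) = 0"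
  by (simp add: sqnorm_def)

lemma sqnorm_scale: "sqnorm n (\<lambda>j. c * x j) = c\<^sup>2 * sqnorm n x"
  unfolding sqnorm_def by (simp add: power_mult_distrib sum_distrib_left)

lemma sqnorm_le_twice: "sqnorm n z \<le> 2 * sqnorm n x + 2 * sqnorm n (\<lambda>j. x j - z j)"
proof -
  have "(z j)\<^sup>2 \<le> 2 * (x j)\<^sup>2 + 2 * (x j - z j)\<^sup>2" for j
    using zero_le_power2[of "2 * x j - z j"] by (simp add: power2_eq_square algebra_simps)
  then show ?thesis
    unfolding sqnorm_def sum_distrib_left sum.distrib[symmetric] by (intro sum_mono) simp
qed

lemma sqnorm_eq_0D: "sqnorm n x = 0 \<Longrightarrow> j < n \<Longrightarrow> x j = 0"
  unfolding sqnorm_def by (subst (asm) sum_nonneg_eq_0_iff) auto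

lemma abs_le_one_if_sqnorm_le_one:
  assumes "sqnorm n x \<le> 1" and "j < n"
  shows "\<bar>x j\<bar> \<le> 1"
proof -
  have "(x j)\<^sup>2 \<le> sqnorm n x"
    unfolding sqnorm_def using assms(2) by (intro member_le_sum) auto
  then show ?thesis
    using assms(1) by (simp flip: abs_square_le_1)
qed

lemma sqnorm_mat_apply: "sqnorm t (mat_apply t d R x) = (\<Sum>i<t. (\<Sum>j<d. R i j * x j)\<^sup>2)"
  unfolding sqnorm_def mat_apply_def by simp

lemma edist_eq_sqrt_sqnorm: "edist n x y = sqrt (sqnorm n (\<lambda>j. x j - y j))"
  by (simp add: edist_def sqnorm_def)

lemma edist_mat_apply:
  "edist t (mat_apply t d G x) (mat_apply t d G y) =
     sqrt (sqnorm t (mat_apply t d G (\<lambda>j. x j - y j)))"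
  by (simp add: edist_def sqnorm_def mat_apply_def sum_subtractf right_diff_distrib)

lemma mat_apply_scale: "mat_apply t d (\<lambda>i j. c * R i j) x = (\<lambda>i. c * mat_apply t d R x i)"
  by (simp add: mat_apply_def sum_distrib_left mult.assoc fun_eq_iff)

lemma bilinear_scale_left: "bilinear t d R (\<lambda>i. c * y i) x = c * bilinear t d R y x"
  unfolding bilinear_def by (simp add: sum_distrib_left mult.assoc)

lemma bilinear_scale_right: "bilinear t d R y (\<lambda>j. c * x j) = c * bilinear t d R y x"
  unfolding bilinear_def by (simp add: sum_distrib_left algebra_simps)

lemma bilinear_split:
  "bilinear t d R y x =
     bilinear t d R y' x' + bilinear t d R (\<lambda>i. y i - y' i) x + bilinear t d R y' (\<lambda>j. x j - x' j)"
  unfolding bilinear_def by (simp add: algebra_simps sum.distrib sum_subtractf sum_distrib_left)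

lemma bilinear_eq_0_if_sqnorm_eq_0:
  assumes "sqnorm t y = 0 \<or> sqnorm d x = 0"
  shows "bilinear t d R y x = 0"
proof -
  have "y i * (\<Sum>j<d. R i j * x j) = 0" if "i < t" for i
    using assms that by (auto simp: sqnorm_eq_0D intro!: sum.neutral)
  then show ?thesis
    unfolding bilinear_def by (intro sum.neutral) auto
qed

lemma bilinear_le_sum_abs:
  assumes "sqnorm t y \<le> 1" and "sqnorm d x \<le> 1"
  shows "bilinear t d R y x \<le> (\<Sum>i<t. \<Sum>j<d. \<bar>R i j\<bar>)"
proof -
  have entry: "\<bar>y i * (R i j * x j)\<bar> \<le> \<bar>R i j\<bar>" if "i < t" "j < d" for i j
  proof -
    have "\<bar>y i\<bar> * (\<bar>R i j\<bar> * \<bar>x j\<bar>) \<le> 1 * (\<bar>R i j\<bar> * 1)"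
      using assms that by (intro mult_mono) (auto simp: abs_le_one_if_sqnorm_le_one)
    then show ?thesis
      by (simp add: abs_mult)
  qed
  have "bilinear t d R y x = (\<Sum>i<t. \<Sum>j<d. y i * (R i j * x j))"
    by (simp add: bilinear_def sum_distrib_left)
  also have "\<dots> \<le> (\<Sum>i<t. \<Sum>j<d. \<bar>y i * (R i j * x j)\<bar>)"
    by (intro sum_mono abs_ge_self)
  also have "\<dots> \<le> (\<Sum>i<t. \<Sum>j<d. \<bar>R i j\<bar>)"
    by (intro sum_mono entry) auto
  finally show ?thesis .
qed

section \<open>Concentration for random sign matrices\<close>

definition rademacher :: "real pmf" where
  "rademacher = pmf_of_set {-1, 1}"

definition rademacher_vec :: "nat \<Rightarrow> (nat \<Rightarrow> real) pmf" where
  "rademacher_vec d = Pi_pmf {..<d} 0 (\<lambda>_. rademacher)"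

definition rademacher_mat :: "nat \<Rightarrow> nat \<Rightarrow> (nat \<Rightarrow> nat \<Rightarrow> real) pmf" where
  "rademacher_mat t d = Pi_pmf {..<t} (\<lambda>_. 0) (\<lambda>_. rademacher_vec d)"

lemma set_pmf_rademacher: "set_pmf rademacher = {-1, 1}"
  unfolding rademacher_def by (subst set_pmf_of_set) auto

lemma expectation_rademacher:
  "measure_pmf.expectation rademacher h = (h 1 + h (-1)) / 2" for h :: "real \<Rightarrow> real"
  unfolding rademacher_def by (subst integral_pmf_of_set) auto

lemma integrable_rademacher [simp]: "integrable (measure_pmf rademacher) (h :: real \<Rightarrow> real)"
  by (simp add: integrable_measure_pmf_finite set_pmf_rademacher)

lemma finite_set_pmf_rademacher_vec [simp]: "finite (set_pmf (rademacher_vec d))"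
  unfolding rademacher_vec_def by (auto simp: set_Pi_pmf set_pmf_rademacher)

lemma finite_set_pmf_rademacher_mat [simp]: "finite (set_pmf (rademacher_mat t d))"
  unfolding rademacher_mat_def by (auto simp: set_Pi_pmf)

lemma integrable_rademacher_vec [simp]:
  "integrable (measure_pmf (rademacher_vec d)) (h :: _ \<Rightarrow> real)"
  by (simp add: integrable_measure_pmf_finite)

lemma integrable_rademacher_mat [simp]:
  "integrable (measure_pmf (rademacher_mat t d)) (h :: _ \<Rightarrow> real)"
  by (simp add: integrable_measure_pmf_finite)

lemma expectation_rademacher_vec_Suc:
  "measure_pmf.expectation (rademacher_vec (Suc d)) h =
     measure_pmf.expectation (rademacher_vec d) (\<lambda>f. (h (f(d := 1)) + h (f(d := -1))) / 2)"
  for h :: "(nat \<Rightarrow> real) \<Rightarrow> real"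
proof -
  have "rademacher_vec (Suc d) = rademacher \<bind> (\<lambda>y. map_pmf (\<lambda>f. f(d := y)) (rademacher_vec d))"
    unfolding rademacher_vec_def lessThan_Suc by (subst Pi_pmf_insert') (auto simp: map_pmf_def)
  then show ?thesis
    by (simp add: rademacher_def pmf_expectation_bind_pmf_of_set add_divide_distrib)
qed

lemma expectation_prod_rademacher_mat:
  fixes f :: "nat \<Rightarrow> (nat \<Rightarrow> real) \<Rightarrow> real"
  assumes "\<And>i r. f i r \<ge> 0"
  shows "measure_pmf.expectation (rademacher_mat t d) (\<lambda>R. \<Prod>i<t. f i (R i)) =
    (\<Prod>i<t. measure_pmf.expectation (rademacher_vec d) (f i))"
  unfolding rademacher_mat_def by (rule expectation_prod_Pi_pmf) (simp_all add: assms)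

lemma cosh_le_exp_half_square: "cosh x \<le> exp (x\<^sup>2 / 2)" for x :: real
proof -
  have "ln (cosh x) \<le> x\<^sup>2 / 2" if "x \<ge> 0" for x :: real
  proof -
    have "cosh x = exp (- x) * (1 + 1/2 * (exp (2 * x) - 1))"
      by (simp add: cosh_field_def field_simps flip: exp_add)
    moreover have "1 + 1/2 * (exp (2 * x) - 1) > 0"
      by (simp add: field_simps add_pos_pos)
    ultimately have "ln (cosh x) = - (2 * x) * (1/2) + ln (1 + 1/2 * (exp (2 * x) - 1))"
      by (simp add: ln_mult)
    (* Hoeffding's auxiliary inequality for p = 1/2 at 2 x; its left-hand side is ln (cosh x). *)
    also have "\<dots> \<le> (2 * x)\<^sup>2 / 8"
      by (rule Hoeffdings_lemma_aux) (use that in auto)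
    finally show ?thesis
      by (simp add: power2_eq_square)
  qed
  from this[of "\<bar>x\<bar>"] have "ln (cosh x) \<le> x\<^sup>2 / 2"
    by (cases "x \<ge> 0") auto
  then show ?thesis
    by (metis cosh_real_pos exp_le_cancel_iff exp_ln)
qed

lemma expectation_exp_rademacher_sum:
  "measure_pmf.expectation (rademacher_vec d) (\<lambda>r. exp (\<Sum>j<d. a j * r j)) \<le> exp (sqnorm d a / 2)"
proof -
  have "measure_pmf.expectation (rademacher_vec d) (\<lambda>r. exp (\<Sum>j<d. a j * r j))
      = measure_pmf.expectation (rademacher_vec d) (\<lambda>r. \<Prod>j<d. exp (a j * r j))"
    by (simp add: exp_sum)
  also have "\<dots> = (\<Prod>j<d. measure_pmf.expectation rademacher (\<lambda>v. exp (a j * v)))"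
    unfolding rademacher_vec_def by (rule expectation_prod_Pi_pmf) auto
  also have "\<dots> = (\<Prod>j<d. cosh (a j))"
    by (simp add: expectation_rademacher cosh_field_def)
  also have "\<dots> \<le> (\<Prod>j<d. exp ((a j)\<^sup>2 / 2))"
    by (intro prod_mono) (simp add: cosh_le_exp_half_square)
  also have "\<dots> = exp (sqnorm d a / 2)"
    by (simp add: sqnorm_def exp_sum sum_divide_distrib)
  finally show ?thesis .
qed

lemma second_moment_rademacher_sum:
  "measure_pmf.expectation (rademacher_vec d) (\<lambda>r. (\<Sum>j<d. a j * r j)\<^sup>2) = sqnorm d a"
proof (induction d)
  case 0
  then show ?case by (simp add: sqnorm_def)
next
  case (Suc d)
  have avg: "((u + c)\<^sup>2 + (u - c)\<^sup>2) / 2 = u\<^sup>2 + c\<^sup>2" for u c :: real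
    by (simp add: power2_eq_square algebra_simps)
  show ?case
    by (simp add: expectation_rademacher_vec_Suc avg Suc.IH sqnorm_def)
qed

lemma fourth_moment_rademacher_sum:
  "measure_pmf.expectation (rademacher_vec d) (\<lambda>r. (\<Sum>j<d. a j * r j) ^ 4) \<le> 3 * (sqnorm d a)\<^sup>2"
proof (induction d)
  case 0
  then show ?case by simp
next
  case (Suc d)
  let ?S = "\<lambda>r. \<Sum>j<d. a j * r j"
  have avg: "((u + c) ^ 4 + (u - c) ^ 4) / 2 = u ^ 4 + 6 * c\<^sup>2 * u\<^sup>2 + c ^ 4" for u c :: real
    by (simp add: power2_eq_square power4_eq_xxxx algebra_simps)
  have "measure_pmf.expectation (rademacher_vec (Suc d)) (\<lambda>r. (\<Sum>j<Suc d. a j * r j) ^ 4)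
      = measure_pmf.expectation (rademacher_vec d) (\<lambda>r. ?S r ^ 4)
        + 6 * (a d)\<^sup>2 * sqnorm d a + (a d) ^ 4"
    by (simp add: expectation_rademacher_vec_Suc avg second_moment_rademacher_sum)
  also have "\<dots> \<le> 3 * (sqnorm d a)\<^sup>2 + 6 * (a d)\<^sup>2 * sqnorm d a + (a d) ^ 4"
    using Suc.IH by simp
  also have "\<dots> \<le> 3 * (sqnorm d a + (a d)\<^sup>2)\<^sup>2"
    using zero_le_even_power[of 4 "a d"]
    by (simp add: power2_eq_square power4_eq_xxxx algebra_simps)
  finally show ?case
    by (simp add: sqnorm_def)
qed

lemma expectation_exp_bilinear:
  "measure_pmf.expectation (rademacher_mat t d) (\<lambda>R. exp (bilinear t d R y x))
     \<le> exp (sqnorm t y * sqnorm d x / 2)"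
proof -
  have "measure_pmf.expectation (rademacher_mat t d) (\<lambda>R. exp (bilinear t d R y x))
      = measure_pmf.expectation (rademacher_mat t d) (\<lambda>R. \<Prod>i<t. exp (\<Sum>j<d. (y i * x j) * R i j))"
    by (simp add: bilinear_def exp_sum sum_distrib_left mult_ac)
  also have "\<dots> =
      (\<Prod>i<t. measure_pmf.expectation (rademacher_vec d) (\<lambda>r. exp (\<Sum>j<d. (y i * x j) * r j)))"
    by (rule expectation_prod_rademacher_mat) simp
  also have "\<dots> \<le> (\<Prod>i<t. exp (sqnorm d (\<lambda>j. y i * x j) / 2))"
    by (intro prod_mono conjI integral_nonneg_AE expectation_exp_rademacher_sum) auto
  also have "\<dots> = exp (sqnorm t y * sqnorm d x / 2)"
    by (simp add: sqnorm_scale sqnorm_def exp_sum sum_distrib_right sum_divide_distrib)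
  finally show ?thesis .
qed

lemma markov_rademacher_mat:
  assumes "\<And>R. u R \<ge> 0" and "c > 0"
  shows "measure_pmf.prob (rademacher_mat t d) {R. c \<le> u R}
    \<le> measure_pmf.expectation (rademacher_mat t d) u / c"
  using integral_Markov_inequality_measure[of "measure_pmf (rademacher_mat t d)" u UNIV c] assms
  by simp

lemma bilinear_upper_tail:
  assumes "sqnorm t y * sqnorm d x \<le> c" and "c > 0" and "s \<ge> 0"
  shows "measure_pmf.prob (rademacher_mat t d) {R. s \<le> bilinear t d R y x} \<le> exp (- s\<^sup>2 / (2 * c))"
proof -
  define l where "l = s / c"
  have l: "l \<ge> 0"
    using assms by (simp add: l_def)
  have scale: "bilinear t d R (\<lambda>i. l * y i) x = l * bilinear t d R y x" for R
    by (simp add: bilinear_def sum_distrib_left mult.assoc)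
  have "measure_pmf.prob (rademacher_mat t d) {R. s \<le> bilinear t d R y x}
      \<le> measure_pmf.prob (rademacher_mat t d)
          {R. exp (l * s) \<le> exp (bilinear t d R (\<lambda>i. l * y i) x)}"
    using l by (intro measure_pmf.finite_measure_mono) (auto simp: scale intro: mult_left_mono)
  also have "\<dots> \<le>
      measure_pmf.expectation (rademacher_mat t d) (\<lambda>R. exp (bilinear t d R (\<lambda>i. l * y i) x))
        / exp (l * s)"
    by (rule markov_rademacher_mat) auto
  also have "\<dots> \<le> exp (l\<^sup>2 * (sqnorm t y * sqnorm d x) / 2) / exp (l * s)"
    using expectation_exp_bilinear[of t d "\<lambda>i. l * y i" x]
    by (intro divide_right_mono) (auto simp: sqnorm_scale mult.assoc)
  also have "\<dots> \<le> exp (l\<^sup>2 * c / 2) / exp (l * s)"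
    using assms(1) by (intro divide_right_mono) (auto intro: mult_left_mono)
  also have "\<dots> = exp (- s\<^sup>2 / (2 * c))"
    using assms(2) by (simp add: l_def power2_eq_square field_simps flip: exp_diff)
  finally show ?thesis .
qed

lemma exp_neg_le_quadratic: "exp (- u) \<le> 1 - u + u\<^sup>2" if "u \<ge> 0" for u :: real
proof -
  have "exp (- u) \<le> 1 / (1 + u)"
    using that exp_ge_add_one_self[of u] by (simp add: exp_minus field_simps)
  also have "\<dots> \<le> 1 - u + u\<^sup>2"
    using that by (simp add: field_simps power2_eq_square)
  finally show ?thesis .
qed

lemma expectation_exp_neg_square_rademacher_sum:
  assumes "l \<ge> 0"
  shows "measure_pmf.expectation (rademacher_vec d) (\<lambda>r. exp (- l * (\<Sum>j<d. v j * r j)\<^sup>2))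
    \<le> 1 - l * sqnorm d v + 3 * l\<^sup>2 * (sqnorm d v)\<^sup>2"
proof -
  let ?S = "\<lambda>r. \<Sum>j<d. v j * r j"
  have "measure_pmf.expectation (rademacher_vec d) (\<lambda>r. exp (- l * (?S r)\<^sup>2))
      \<le> measure_pmf.expectation (rademacher_vec d) (\<lambda>r. 1 - l * (?S r)\<^sup>2 + l\<^sup>2 * ?S r ^ 4)"
    using exp_neg_le_quadratic[of "l * (?S _)\<^sup>2"] assms
    by (intro integral_mono) (auto simp: power_mult_distrib)
  also have "\<dots> =
      1 - l * sqnorm d v + l\<^sup>2 * measure_pmf.expectation (rademacher_vec d) (\<lambda>r. ?S r ^ 4)"
    by (simp add: second_moment_rademacher_sum)
  also have "\<dots> \<le> 1 - l * sqnorm d v + 3 * l\<^sup>2 * (sqnorm d v)\<^sup>2"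
    using mult_left_mono[OF fourth_moment_rademacher_sum[of d v], of "l\<^sup>2"] by (simp add: mult_ac)
  finally show ?thesis .
qed

lemma expectation_exp_neg_sqnorm_mat_apply:
  assumes "l \<ge> 0"
  shows "measure_pmf.expectation (rademacher_mat t d) (\<lambda>R. exp (- l * sqnorm t (mat_apply t d R v)))
    \<le> (1 - l * sqnorm d v + 3 * l\<^sup>2 * (sqnorm d v)\<^sup>2) ^ t"
proof -
  have "measure_pmf.expectation (rademacher_mat t d) (\<lambda>R. exp (- l * sqnorm t (mat_apply t d R v)))
      = measure_pmf.expectation (rademacher_mat t d) (\<lambda>R. \<Prod>i<t. exp (- l * (\<Sum>j<d. v j * R i j)\<^sup>2))"
    by (simp add: sqnorm_mat_apply exp_sum sum_distrib_left mult_ac)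
  also have "\<dots> =
      (\<Prod>i<t. measure_pmf.expectation (rademacher_vec d) (\<lambda>r. exp (- l * (\<Sum>j<d. v j * r j)\<^sup>2)))"
    by (rule expectation_prod_rademacher_mat) simp
  also have "\<dots> \<le> (\<Prod>i<t. 1 - l * sqnorm d v + 3 * l\<^sup>2 * (sqnorm d v)\<^sup>2)"
    using expectation_exp_neg_square_rademacher_sum[OF assms]
    by (intro prod_mono conjI integral_nonneg_AE) auto
  finally show ?thesis
    by simp
qed

lemma sqnorm_mat_apply_lower_tail:
  "measure_pmf.prob (rademacher_mat t d) {R. sqnorm t (mat_apply t d R v) < real t * sqnorm d v / 2}
     \<le> exp (- real t / 48)"
proof (cases "sqnorm d v = 0")
  case True
  then have "{R. sqnorm t (mat_apply t d R v) < real t * sqnorm d v / 2} = {}"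
    by (simp add: not_less)
  then show ?thesis
    by simp
next
  case False
  define a where "a = sqnorm d v"
  define l where "l = 1 / (12 * a)"
  have a: "a > 0"
    using False sqnorm_nonneg[of d v] unfolding a_def by linarith
  then have l: "l > 0"
    by (simp add: l_def)
  let ?X = "\<lambda>R. sqnorm t (mat_apply t d R v)"
  have "measure_pmf.prob (rademacher_mat t d) {R. ?X R < real t * a / 2}
      \<le> measure_pmf.prob (rademacher_mat t d) {R. exp (- l * (real t * a / 2)) \<le> exp (- l * ?X R)}"
    using l by (intro measure_pmf.finite_measure_mono) auto
  also have "\<dots> \<le> measure_pmf.expectation (rademacher_mat t d) (\<lambda>R. exp (- l * ?X R))
      / exp (- l * (real t * a / 2))"
    by (rule markov_rademacher_mat) auto
  also have "\<dots> \<le> (1 - l * a + 3 * l\<^sup>2 * a\<^sup>2) ^ t / exp (- l * (real t * a / 2))"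
    using expectation_exp_neg_sqnorm_mat_apply[of l t d v] l
    by (intro divide_right_mono) (auto simp: a_def)
  also have "\<dots> = (15 / 16) ^ t / exp (- real t / 24)"
    using a by (simp add: l_def power2_eq_square field_simps)
  also have "\<dots> \<le> exp (- 1 / 16) ^ t / exp (- real t / 24)"
    using exp_ge_add_one_self[of "- 1 / 16 :: real"] by (intro divide_right_mono power_mono) auto
  also have "\<dots> = exp (- real t / 48)"
    by (simp flip: exp_of_nat_mult exp_diff)
  finally show ?thesis
    by (simp add: a_def)
qed

section \<open>Operator norm through a grid net\<close>

definition lattice_ball :: "nat \<Rightarrow> real \<Rightarrow> (nat \<Rightarrow> int) set" where
  "lattice_ball n B = {w. (\<forall>j\<ge>n. w j = 0) \<and> (\<Sum>j<n. (of_int (w j))\<^sup>2) \<le> B}"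

lemma sum_exp_neg_square_le: "(\<Sum>m = -int K..int K. exp (- (of_int m)\<^sup>2)) \<le> 3 - 2 * (1/2::real) ^ K"
proof (induction K)
  case 0
  then show ?case by simp
next
  case (Suc K)
  have "real K + 1 \<le> (real K + 1) * (real K + 1)"
    using mult_left_mono[of 1 "real K + 1" "real K + 1"] by simp
  then have "exp (- (real K + 1)\<^sup>2) \<le> exp (- (real K + 1))"
    unfolding exp_le_cancel_iff power2_eq_square by linarith
  also have "\<dots> = exp (-1) ^ Suc K"
    using exp_of_nat_mult[of "Suc K" "-1"] by (simp add: algebra_simps)
  also have "\<dots> \<le> (1/2) ^ Suc K"
    using exp_ge_add_one_self[of 1] by (intro power_mono) (auto simp: exp_minus field_simps)
  finally have last: "exp (- (real K + 1)\<^sup>2) \<le> (1/2) ^ Suc K" .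
  have "{-int (Suc K)..int (Suc K)} = insert (int K + 1) (insert (- (int K + 1)) {-int K..int K})"
    by auto
  then have "(\<Sum>m = -int (Suc K)..int (Suc K). exp (- (of_int m)\<^sup>2))
      = 2 * exp (- (real K + 1)\<^sup>2) + (\<Sum>m = -int K..int K. exp (- (of_int m)\<^sup>2 :: real))"
    by (simp add: power2_eq_square algebra_simps)
  then show ?case
    using Suc.IH last by simp
qed

lemma sum_exp_neg_square_le_3: "(\<Sum>m = -K..K. exp (- (of_int m)\<^sup>2)) \<le> (3::real)"
proof (cases "K < 0")
  case False
  then obtain k where k: "K = int k"
    by (metis nonneg_int_cases not_less)
  have "(0::real) \<le> (1/2) ^ k"
    by simp
  then show ?thesis
    unfolding k using sum_exp_neg_square_le[of k] by linarith
qed simp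

lemma lattice_ball_Suc_subset:
  "lattice_ball (Suc n) B \<subseteq>
     (\<Union>m\<in>{-\<lceil>B\<rceil>..\<lceil>B\<rceil>}. (\<lambda>w. w(n := m)) ` lattice_ball n (B - (of_int m)\<^sup>2))"
proof
  fix w assume w: "w \<in> lattice_ball (Suc n) B"
  let ?rest = "\<Sum>j<n. (of_int (w j))\<^sup>2 :: real"
  have rest: "?rest + (of_int (w n))\<^sup>2 \<le> B" and high: "\<forall>j>n. w j = 0"
    using w by (simp_all add: lattice_ball_def Suc_le_eq)
  have "(\<Sum>j<n. (of_int ((w(n := 0)) j))\<^sup>2) = ?rest"
    by (intro sum.cong) auto
  then have "w(n := 0) \<in> lattice_ball n (B - (of_int (w n))\<^sup>2)"
    using rest high by (auto simp: lattice_ball_def le_less)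
  moreover have "\<bar>w n\<bar> \<le> \<lceil>B\<rceil>"
  proof -
    have "\<bar>w n\<bar> \<le> (w n)\<^sup>2"
      using mult_left_mono[of 1 "\<bar>w n\<bar>" "\<bar>w n\<bar>"] by (cases "w n = 0") (auto simp: power2_eq_square)
    then have "(of_int \<bar>w n\<bar> :: real) \<le> (of_int (w n))\<^sup>2"
      by (simp only: of_int_le_iff flip: of_int_power)
    also have "\<dots> \<le> B"
      using rest sum_nonneg[of "{..<n}" "\<lambda>j. (of_int (w j))\<^sup>2 :: real"] by simp
    finally show ?thesis
      by (simp add: le_ceiling_iff)
  qed
  ultimately show "w \<in> (\<Union>m\<in>{-\<lceil>B\<rceil>..\<lceil>B\<rceil>}. (\<lambda>w. w(n := m)) ` lattice_ball n (B - (of_int m)\<^sup>2))"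
    by (intro UN_I[of "w n"] image_eqI[of w _ "w(n := 0)"]) auto
qed

(* Give each lattice point w of the ball the weight exp (B - |w|^2) >= 1. Summing out the last
   coordinate m costs a factor sum of exp (- m^2) over m, which is at most 3. *)
lemma finite_card_lattice_ball:
  "finite (lattice_ball n B) \<and> real (card (lattice_ball n B)) \<le> exp B * 3 ^ n"
proof (induction n arbitrary: B)
  case 0
  have "lattice_ball 0 B = (if B \<ge> 0 then {\<lambda>_. 0} else {})"
    by (auto simp: lattice_ball_def)
  then show ?case
    by simp
next
  case (Suc n)
  let ?F = "\<lambda>m. (\<lambda>w. w(n := m)) ` lattice_ball n (B - (of_int m)\<^sup>2)"
  have finite_F: "finite (?F m)" for m
    using Suc.IH by blast
  have card_F: "real (card (?F m)) \<le> exp (B - (of_int m)\<^sup>2) * 3 ^ n" for m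
    using card_image_le[of "lattice_ball n (B - (of_int m)\<^sup>2)" "\<lambda>w. w(n := m)"]
      Suc.IH[of "B - (of_int m)\<^sup>2"] by linarith
  have finite_ball: "finite (lattice_ball (Suc n) B)"
    by (rule finite_subset[OF lattice_ball_Suc_subset]) (auto intro: finite_F)
  have "real (card (lattice_ball (Suc n) B)) \<le> (\<Sum>m = -\<lceil>B\<rceil>..\<lceil>B\<rceil>. real (card (?F m)))"
    using card_mono[OF _ lattice_ball_Suc_subset] card_UN_le[of "{-\<lceil>B\<rceil>..\<lceil>B\<rceil>}" ?F] finite_F
    by (simp flip: of_nat_sum) (meson order_trans finite_UN_I finite_atLeastAtMost_int)
  also have "\<dots> \<le> (\<Sum>m = -\<lceil>B\<rceil>..\<lceil>B\<rceil>. exp (B - (of_int m)\<^sup>2) * 3 ^ n)"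
    by (intro sum_mono card_F)
  also have "\<dots> = exp B * 3 ^ n * (\<Sum>m = -\<lceil>B\<rceil>..\<lceil>B\<rceil>. exp (- (of_int m)\<^sup>2))"
    by (simp add: sum_distrib_left exp_diff exp_minus field_simps)
  also have "\<dots> \<le> exp B * 3 ^ Suc n"
    using mult_left_mono[OF sum_exp_neg_square_le_3, of "exp B * 3 ^ n"] by simp
  finally show ?case
    using finite_ball by simp
qed

definition grid_net :: "nat \<Rightarrow> (nat \<Rightarrow> real) set" where
  "grid_net n = {z. (\<forall>j\<ge>n. z j = 0) \<and> (\<forall>j<n. 2 * sqrt n * z j \<in> \<int>) \<and> sqnorm n z \<le> 4}"

lemma zero_in_grid_net: "(\<lambda>_. 0) \<in> grid_net n"
  by (simp add: grid_net_def sqnorm_def)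

lemma sqnorm_grid_net_le: "z \<in> grid_net n \<Longrightarrow> sqnorm n z \<le> 4"
  by (simp add: grid_net_def)

lemma grid_net_subset_image_lattice_ball:
  "grid_net n \<subseteq> (\<lambda>w j. of_int (w j) / (2 * sqrt n)) ` lattice_ball n (16 * real n)"
proof
  fix z assume z: "z \<in> grid_net n"
  define w where "w j = \<lfloor>2 * sqrt n * z j\<rfloor>" for j
  have w: "of_int (w j) = 2 * sqrt n * z j" for j
    using z by (cases "j < n") (auto simp: grid_net_def w_def elim!: Ints_cases)
  have "(\<Sum>j<n. (of_int (w j))\<^sup>2) = 4 * real n * sqnorm n z"
    by (simp add: w sqnorm_def sum_distrib_left power_mult_distrib)
  also have "\<dots> \<le> 16 * real n"
    using mult_left_mono[OF sqnorm_grid_net_le[OF z], of "4 * real n"] by simp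
  finally have "w \<in> lattice_ball n (16 * real n)"
    using z by (simp add: lattice_ball_def grid_net_def w_def)
  moreover have "z = (\<lambda>j. of_int (w j) / (2 * sqrt n))"
    using z by (auto simp: w grid_net_def)
  ultimately show "z \<in> (\<lambda>w j. of_int (w j) / (2 * sqrt n)) ` lattice_ball n (16 * real n)"
    by blast
qed

lemma finite_card_grid_net: "finite (grid_net n) \<and> real (card (grid_net n)) \<le> exp (18 * real n)"
proof -
  have lattice: "finite (lattice_ball n (16 * real n))"
    "real (card (lattice_ball n (16 * real n))) \<le> exp (16 * real n) * 3 ^ n"
    using finite_card_lattice_ball by blast+
  then have "finite (grid_net n) \<and> card (grid_net n) \<le> card (lattice_ball n (16 * real n))"
    using grid_net_subset_image_lattice_ball
    by (meson card_image_le card_mono finite_imageI finite_subset order_trans)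
  moreover have "(3::real) ^ n \<le> exp 2 ^ n"
    using exp_ge_add_one_self[of 2] by (intro power_mono) auto
  then have "exp (16 * real n) * 3 ^ n \<le> exp (16 * real n) * exp (2 * real n)"
    by (simp flip: exp_of_nat_mult add: mult.commute)
  ultimately show ?thesis
    using lattice(2) by (simp flip: exp_add)
qed

lemma round_scaled_error:
  fixes c x :: real
  assumes "c > 0"
  shows "(x - of_int (round (c * x)) / c)\<^sup>2 \<le> 1 / (4 * c\<^sup>2)"
proof -
  have "\<bar>c * x - of_int (round (c * x))\<bar> \<le> 1/2"
    using of_int_round_abs_le[of "c * x"] by linarith
  then have "(c * x - of_int (round (c * x)))\<^sup>2 \<le> (1/2)\<^sup>2"
    by (metis abs_ge_zero power2_abs power_mono)
  then have "(c * x - of_int (round (c * x)))\<^sup>2 / c\<^sup>2 \<le> (1/2)\<^sup>2 / c\<^sup>2"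
    by (rule divide_right_mono) simp
  moreover have "x - of_int (round (c * x)) / c = (c * x - of_int (round (c * x))) / c"
    using assms by (simp add: field_simps)
  ultimately show ?thesis
    by (simp add: power_divide power2_eq_square)
qed

lemma grid_net_covers:
  assumes "sqnorm n x \<le> 1"
  shows "\<exists>z\<in>grid_net n. sqnorm n (\<lambda>j. x j - z j) \<le> 1/16"
proof -
  define z where "z j = (if j < n then round (2 * sqrt n * x j) / (2 * sqrt n) else 0)" for j
  have "(x j - z j)\<^sup>2 \<le> 1 / (4 * (2 * sqrt n)\<^sup>2)" if "j < n" for j
    using that round_scaled_error[of "2 * sqrt n" "x j"] by (simp add: z_def)
  then have "sqnorm n (\<lambda>j. x j - z j) \<le> (\<Sum>j<n. 1 / (4 * (2 * sqrt n)\<^sup>2))"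
    unfolding sqnorm_def by (intro sum_mono) simp
  also have "\<dots> \<le> 1/16"
    by (simp add: power_mult_distrib)
  finally have close: "sqnorm n (\<lambda>j. x j - z j) \<le> 1/16" .
  then have "sqnorm n z \<le> 4"
    using assms sqnorm_le_twice[of n z x] by linarith
  moreover have "2 * sqrt n * z j \<in> \<int>" if "j < n" for j
    using that by (simp add: z_def)
  ultimately have "z \<in> grid_net n"
    by (simp add: grid_net_def z_def)
  then show ?thesis
    using close by blast
qed

lemma bilinear_le_of_unit_bound:
  assumes unit: "\<And>y x. sqnorm t y \<le> 1 \<Longrightarrow> sqnorm d x \<le> 1 \<Longrightarrow> bilinear t d R y x \<le> c"
  shows "bilinear t d R y x \<le> c * sqrt (sqnorm t y) * sqrt (sqnorm d x)"
proof (cases "sqnorm t y = 0 \<or> sqnorm d x = 0")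
  case True
  have "0 \<le> c"
    using unit[of "\<lambda>_. 0" "\<lambda>_. 0"] by (simp add: sqnorm_def bilinear_def)
  then show ?thesis
    using True by (simp add: bilinear_eq_0_if_sqnorm_eq_0)
next
  case False
  define b a where "b = sqrt (sqnorm t y)" and "a = sqrt (sqnorm d x)"
  have pos: "a > 0" "b > 0"
    using False sqnorm_nonneg[of t y] sqnorm_nonneg[of d x]
    by (auto simp: a_def b_def order_le_less)
  have "sqnorm t (\<lambda>i. (1 / b) * y i) = 1" "sqnorm d (\<lambda>j. (1 / a) * x j) = 1"
    unfolding sqnorm_scale using pos by (simp_all add: a_def b_def power_divide)
  then have "bilinear t d R (\<lambda>i. (1 / b) * y i) (\<lambda>j. (1 / a) * x j) \<le> c"
    by (intro unit) simp_all
  then have "bilinear t d R y x / (b * a) \<le> c"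
    unfolding bilinear_scale_left bilinear_scale_right by simp
  then show ?thesis
    using pos by (simp add: a_def b_def divide_le_eq mult.assoc)
qed

lemma bilinear_le_grid_net_approx:
  assumes net: "\<forall>y'\<in>grid_net t. \<forall>x'\<in>grid_net d. bilinear t d R y' x' < s"
    and unit: "\<And>y x. sqnorm t y \<le> 1 \<Longrightarrow> sqnorm d x \<le> 1 \<Longrightarrow> bilinear t d R y x \<le> c"
    and "sqnorm t y \<le> 1" and "sqnorm d x \<le> 1"
  shows "bilinear t d R y x \<le> s + 3/4 * c"
proof -
  obtain y' where y': "y' \<in> grid_net t" "sqnorm t (\<lambda>i. y i - y' i) \<le> 1/16"
    using grid_net_covers assms(3) by blast
  obtain x' where x': "x' \<in> grid_net d" "sqnorm d (\<lambda>j. x j - x' j) \<le> 1/16"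
    using grid_net_covers assms(4) by blast
  have "sqnorm t (\<lambda>i. 4 * (y i - y' i)) \<le> 1"
    unfolding sqnorm_scale using y'(2) by simp
  then have "bilinear t d R (\<lambda>i. 4 * (y i - y' i)) x \<le> c"
    using assms(4) by (intro unit)
  then have y_err: "bilinear t d R (\<lambda>i. y i - y' i) x \<le> c / 4"
    unfolding bilinear_scale_left by simp
  have "sqnorm t (\<lambda>i. 1/2 * y' i) \<le> 1" "sqnorm d (\<lambda>j. 4 * (x j - x' j)) \<le> 1"
    unfolding sqnorm_scale using x'(2) sqnorm_grid_net_le[OF y'(1)]
    by (simp_all add: power2_eq_square)
  then have "bilinear t d R (\<lambda>i. 1/2 * y' i) (\<lambda>j. 4 * (x j - x' j)) \<le> c"
    by (intro unit)
  then have x_err: "bilinear t d R y' (\<lambda>j. x j - x' j) \<le> c / 2"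
    unfolding bilinear_scale_left bilinear_scale_right by simp
  show ?thesis
    using bilinear_split[of t d R y x y' x'] net y'(1) x'(1) y_err x_err by fastforce
qed

lemma grid_net_bound_pos:
  assumes "\<forall>y'\<in>grid_net t. \<forall>x'\<in>grid_net d. bilinear t d R y' x' < s"
  shows "s > 0"
  using assms zero_in_grid_net[of t] zero_in_grid_net[of d] by (fastforce simp: bilinear_def)

lemma bilinear_le_grid_net_bound:
  assumes net: "\<forall>y'\<in>grid_net t. \<forall>x'\<in>grid_net d. bilinear t d R y' x' < s"
  shows "bilinear t d R y x \<le> 4 * s * sqrt (sqnorm t y) * sqrt (sqnorm d x)"
proof -
  define U where "U = {bilinear t d R y x | y x. sqnorm t y \<le> 1 \<and> sqnorm d x \<le> 1}"
  have "sqnorm t (\<lambda>_. 0) \<le> 1" "sqnorm d (\<lambda>_. 0) \<le> 1"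
    by simp_all
  then have "bilinear t d R (\<lambda>_. 0) (\<lambda>_. 0) \<in> U"
    unfolding U_def by blast
  then have ne: "U \<noteq> {}"
    by blast
  have bdd: "bdd_above U"
    unfolding U_def
    by (rule bdd_aboveI[where M = "\<Sum>i<t. \<Sum>j<d. \<bar>R i j\<bar>"]) (auto intro: bilinear_le_sum_abs)
  have le_Sup: "bilinear t d R y x \<le> Sup U" if "sqnorm t y \<le> 1" "sqnorm d x \<le> 1" for y x
    using that by (intro cSup_upper bdd) (auto simp: U_def)
  have "Sup U \<le> s + 3/4 * Sup U"
    using bilinear_le_grid_net_approx[OF net le_Sup] by (intro cSup_least ne) (auto simp: U_def)
  then have "bilinear t d R y x \<le> 4 * s" if "sqnorm t y \<le> 1" "sqnorm d x \<le> 1" for y x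
    using le_Sup[OF that] by linarith
  then show ?thesis
    by (rule bilinear_le_of_unit_bound)
qed

lemma sqnorm_mat_apply_le_grid_net_bound:
  assumes net: "\<forall>y'\<in>grid_net t. \<forall>x'\<in>grid_net d. bilinear t d R y' x' < s"
  shows "sqnorm t (mat_apply t d R x) \<le> (4 * s)\<^sup>2 * sqnorm d x"
proof -
  define a where "a = sqrt (sqnorm t (mat_apply t d R x))"
  have "bilinear t d R (mat_apply t d R x) x = sqnorm t (mat_apply t d R x)"
    unfolding bilinear_def sqnorm_def mat_apply_def by (simp add: power2_eq_square)
  then have "a * a \<le> (4 * s * sqrt (sqnorm d x)) * a"
    using bilinear_le_grid_net_bound[OF net, of "mat_apply t d R x" x] by (simp add: a_def mult_ac)
  moreover have "s > 0"
    using grid_net_bound_pos[OF net] .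
  moreover have "a \<ge> 0"
    by (simp add: a_def)
  ultimately have "a \<le> 4 * s * sqrt (sqnorm d x)"
    by (cases "a = 0") (auto intro: mult_right_le_imp_le)
  then have "a\<^sup>2 \<le> (4 * s * sqrt (sqnorm d x))\<^sup>2"
    using \<open>a \<ge> 0\<close> by (intro power_mono)
  then show ?thesis
    by (simp add: a_def power_mult_distrib)
qed

section \<open>Furthest point queries under bounded distortion\<close>

lemma edist_nonneg: "edist n x y \<ge> 0"
  unfolding edist_def by (intro real_sqrt_ge_zero sum_nonneg) auto

lemma dist_set_le_edist: "finite Q \<Longrightarrow> q \<in> Q \<Longrightarrow> dist_set n x Q \<le> edist n x q"
  unfolding dist_set_def by simp

lemma dist_set_attained: "finite Q \<Longrightarrow> Q \<noteq> {} \<Longrightarrow> \<exists>q\<in>Q. dist_set n x Q = edist n x q"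
  using Min_in[of "edist n x ` Q"] unfolding dist_set_def by blast

lemma dist_set_nonneg: "finite Q \<Longrightarrow> Q \<noteq> {} \<Longrightarrow> dist_set n x Q \<ge> 0"
  using dist_set_attained edist_nonneg by metis

lemma dist_set_le_FPQ: "finite P \<Longrightarrow> p \<in> P \<Longrightarrow> dist_set n p Q \<le> FPQ n P Q"
  unfolding FPQ_def by simp

lemma FPQ_attained: "finite P \<Longrightarrow> P \<noteq> {} \<Longrightarrow> \<exists>p\<in>P. FPQ n P Q = dist_set n p Q"
  using Max_in[of "(\<lambda>p. dist_set n p Q) ` P"] unfolding FPQ_def by blast

lemma dist_set_image_le:
  assumes "finite Q" "Q \<noteq> {}" and "p \<in> P"
    and expand: "\<forall>p\<in>P. \<forall>q\<in>Q. edist t (g p) (g q) \<le> B * edist d p q"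
  shows "dist_set t (g p) (g ` Q) \<le> B * dist_set d p Q"
proof -
  obtain q where q: "q \<in> Q" "dist_set d p Q = edist d p q"
    using dist_set_attained assms(1,2) by blast
  have "dist_set t (g p) (g ` Q) \<le> edist t (g p) (g q)"
    using assms(1) q(1) by (intro dist_set_le_edist) auto
  also have "\<dots> \<le> B * dist_set d p Q"
    using expand assms(3) q by simp
  finally show ?thesis .
qed

lemma FPQ_le_FPQ_image:
  assumes "finite P" "finite Q" "Q \<noteq> {}"
    and p0: "p0 \<in> P" "FPQ d P Q = dist_set d p0 Q"
    and noncontract: "\<forall>q\<in>Q. edist d p0 q \<le> edist t (g p0) (g q)"
  shows "FPQ d P Q \<le> FPQ t (g ` P) (g ` Q)"
proof -
  obtain q where q: "q \<in> Q" "dist_set t (g p0) (g ` Q) = edist t (g p0) (g q)"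
    using dist_set_attained[of "g ` Q" t "g p0"] assms(2,3) by auto
  have "FPQ d P Q \<le> edist d p0 q"
    using p0 assms(2) q(1) by (simp add: dist_set_le_edist)
  also have "\<dots> \<le> dist_set t (g p0) (g ` Q)"
    using noncontract q by simp
  also have "\<dots> \<le> FPQ t (g ` P) (g ` Q)"
    using assms(1) p0(1) by (intro dist_set_le_FPQ) auto
  finally show ?thesis .
qed

lemma FPQ_image_le:
  assumes "finite P" "P \<noteq> {}" "finite Q" "Q \<noteq> {}" "B \<ge> 0"
    and expand: "\<forall>p\<in>P. \<forall>q\<in>Q. edist t (g p) (g q) \<le> B * edist d p q"
  shows "FPQ t (g ` P) (g ` Q) \<le> B * FPQ d P Q"
proof -
  obtain p where p: "p \<in> P" "FPQ t (g ` P) (g ` Q) = dist_set t (g p) (g ` Q)"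
    using FPQ_attained[of "g ` P" t "g ` Q"] assms(1,2) by auto
  have "FPQ t (g ` P) (g ` Q) \<le> B * dist_set d p Q"
    using p dist_set_image_le[OF assms(3,4) p(1) expand] by simp
  also have "\<dots> \<le> B * FPQ d P Q"
    using assms(1,5) p(1) by (intro mult_left_mono dist_set_le_FPQ)
  finally show ?thesis .
qed

definition preserves_FPQ :: "nat \<Rightarrow> nat \<Rightarrow> real \<Rightarrow> real \<Rightarrow> (nat \<Rightarrow> real) set \<Rightarrow> (nat \<Rightarrow> real) set
    \<Rightarrow> ((nat \<Rightarrow> real) \<Rightarrow> (nat \<Rightarrow> real)) \<Rightarrow> bool" where
  "preserves_FPQ d t \<beta> \<gamma> P Q g \<longleftrightarrow>
     estimation \<gamma> (FPQ d P Q) (FPQ t (g ` P) (g ` Q)) \<and>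
     (\<forall>p\<in>P. approx_sol t \<beta> (g ` P) (g ` Q) (g p) \<longrightarrow> approx_sol d \<gamma> P Q p)"

lemma preserves_FPQ_if_bounded_distortion:
  assumes P: "finite P" "P \<noteq> {}" and Q: "finite Q" "Q \<noteq> {}"
    and expand: "\<forall>p\<in>P. \<forall>q\<in>Q. edist t (g p) (g q) \<le> B * edist d p q"
    and p0: "p0 \<in> P" "FPQ d P Q = dist_set d p0 Q"
    and noncontract: "\<forall>q\<in>Q. edist d p0 q \<le> edist t (g p0) (g q)"
    and "B \<ge> 0" "\<beta> \<ge> 1" "\<beta> * B \<le> \<gamma>" "\<gamma> > 0"
  shows "preserves_FPQ d t \<beta> \<gamma> P Q g"
  unfolding preserves_FPQ_def
proof (intro conjI ballI impI)
  have lower: "FPQ d P Q \<le> FPQ t (g ` P) (g ` Q)"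
    using FPQ_le_FPQ_image[OF P(1) Q p0 noncontract] .
  have "B \<le> \<gamma>"
    using mult_right_mono[OF \<open>\<beta> \<ge> 1\<close> \<open>B \<ge> 0\<close>] \<open>\<beta> * B \<le> \<gamma>\<close> by simp
  moreover have "0 \<le> FPQ d P Q"
    using p0 dist_set_nonneg[OF Q] by metis
  ultimately have "B * FPQ d P Q \<le> \<gamma> * FPQ d P Q"
    by (rule mult_right_mono)
  then show "estimation \<gamma> (FPQ d P Q) (FPQ t (g ` P) (g ` Q))"
    using lower FPQ_image_le[OF P Q \<open>B \<ge> 0\<close> expand] by (simp add: estimation_def)
  fix p assume p: "p \<in> P" and sol: "approx_sol t \<beta> (g ` P) (g ` Q) (g p)"
  have "FPQ d P Q \<le> \<beta> * dist_set t (g p) (g ` Q)"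
    using lower sol \<open>\<beta> \<ge> 1\<close> by (simp add: approx_sol_def field_simps)
  also have "\<dots> \<le> \<beta> * (B * dist_set d p Q)"
    using dist_set_image_le[OF Q p expand] \<open>\<beta> \<ge> 1\<close> by (intro mult_left_mono) auto
  also have "\<dots> \<le> \<gamma> * dist_set d p Q"
    using dist_set_nonneg[OF Q] \<open>\<beta> * B \<le> \<gamma>\<close> by (simp add: mult.assoc[symmetric] mult_right_mono)
  finally show "approx_sol d \<gamma> P Q p"
    using p \<open>\<gamma> > 0\<close> by (simp add: approx_sol_def field_simps)
qed

section \<open>The random projection\<close>

lemma bilinear_upper_tail_grid_net:
  assumes "y \<in> grid_net t" "x \<in> grid_net d" "s \<ge> 0"
  shows "measure_pmf.prob (rademacher_mat t d) {R. s \<le> bilinear t d R y x} \<le> exp (- s\<^sup>2 / 32)"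
proof -
  have "sqnorm t y * sqnorm d x \<le> 4 * 4"
    using assms sqnorm_grid_net_le by (intro mult_mono) auto
  then show ?thesis
    using bilinear_upper_tail[of t y d x 16 s] assms(3) by simp
qed

lemma prob_bilinear_ge_on_grid_net:
  assumes "t \<ge> 1" "d \<ge> 1"
  shows "measure_pmf.prob (rademacher_mat t d)
    {R. \<exists>y\<in>grid_net t. \<exists>x\<in>grid_net d. sqrt (736 * real (t + d)) \<le> bilinear t d R y x} \<le> 1/10"
proof -
  (* 736 = 32 * 23: the tail exp (- s^2 / 32) of one pair of net points beats the e^(18 (t + d))
     pairs by the factor e^(- 5 (t + d)). *)
  define s where "s = sqrt (736 * real (t + d))"
  define N where "N = grid_net t \<times> grid_net d"
  have fin: "finite N"
    using finite_card_grid_net by (simp add: N_def)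
  have "- s\<^sup>2 / 32 = - 23 * real (t + d)" "s \<ge> 0"
    by (simp_all add: s_def)
  then have each: "measure_pmf.prob (rademacher_mat t d) {R. s \<le> bilinear t d R (fst z) (snd z)}
      \<le> exp (- 23 * real (t + d))" if "z \<in> N" for z
    using that bilinear_upper_tail_grid_net[of "fst z" t "snd z" d s] by (auto simp: N_def)
  have union: "{R. \<exists>y\<in>grid_net t. \<exists>x\<in>grid_net d. s \<le> bilinear t d R y x}
      = (\<Union>z\<in>N. {R. s \<le> bilinear t d R (fst z) (snd z)})"
    by (auto simp: N_def; blast)
  have "measure_pmf.prob (rademacher_mat t d)
        {R. \<exists>y\<in>grid_net t. \<exists>x\<in>grid_net d. s \<le> bilinear t d R y x}
      \<le> (\<Sum>z\<in>N. measure_pmf.prob (rademacher_mat t d) {R. s \<le> bilinear t d R (fst z) (snd z)})"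
    unfolding union by (rule measure_UNION_le[OF fin]) simp
  also have "\<dots> \<le> real (card N) * exp (- 23 * real (t + d))"
    using sum_mono[OF each] by simp
  also have "\<dots> \<le> exp (18 * real t) * exp (18 * real d) * exp (- 23 * real (t + d))"
    using finite_card_grid_net[of t] finite_card_grid_net[of d]
    by (intro mult_right_mono) (auto simp: N_def card_cartesian_product intro: mult_mono)
  also have "\<dots> = 1 / exp (5 * real (t + d))"
    by (simp add: exp_minus field_simps flip: exp_add)
  also have "\<dots> \<le> 1 / 10"
  proof -
    have "10 \<le> 1 + 5 * real (t + d)"
      using assms by simp
    then have "10 \<le> exp (5 * real (t + d))"
      using exp_ge_add_one_self[of "5 * real (t + d)"] by linarith
    then show ?thesis
      by (intro divide_left_mono) auto
  qed
  finally show ?thesis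
    by (simp add: s_def)
qed

lemma prob_some_mat_apply_contracts:
  assumes "finite V"
  shows "measure_pmf.prob (rademacher_mat t d)
      {R. \<exists>v\<in>V. sqnorm t (mat_apply t d R v) < real t * sqnorm d v / 2}
    \<le> real (card V) * exp (- real t / 48)"
proof -
  define E where "E v = {R. sqnorm t (mat_apply t d R v) < real t * sqnorm d v / 2}" for v
  have "{R. \<exists>v\<in>V. sqnorm t (mat_apply t d R v) < real t * sqnorm d v / 2} = (\<Union>v\<in>V. E v)"
    by (auto simp: E_def)
  moreover have "measure_pmf.prob (rademacher_mat t d) (\<Union>v\<in>V. E v)
      \<le> (\<Sum>v\<in>V. measure_pmf.prob (rademacher_mat t d) (E v))"
    by (rule measure_UNION_le[OF assms]) simp
  moreover have "\<dots> \<le> real (card V) * exp (- real t / 48)"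
    using sum_mono[of V _ "\<lambda>_. exp (- real t / 48)", OF sqnorm_mat_apply_lower_tail]
    by (simp add: E_def)
  ultimately show ?thesis
    by simp
qed

lemma prob_good_sign_matrix:
  assumes "t \<ge> 1" "d \<ge> 1" "finite V" "real (card V) * exp (- real t / 48) \<le> 1/10"
  shows "4/5 \<le> measure_pmf.prob (rademacher_mat t d)
    {R. (\<forall>y\<in>grid_net t. \<forall>x\<in>grid_net d. bilinear t d R y x < sqrt (736 * real (t + d))) \<and>
        (\<forall>v\<in>V. real t * sqnorm d v / 2 \<le> sqnorm t (mat_apply t d R v))}"
    (is "_ \<le> measure_pmf.prob _ ?Good")
proof -
  let ?p = "measure_pmf.prob (rademacher_mat t d)"
  let ?Bad1 = "{R. \<exists>y\<in>grid_net t. \<exists>x\<in>grid_net d. sqrt (736 * real (t + d)) \<le> bilinear t d R y x}"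
  let ?Bad2 = "{R. \<exists>v\<in>V. sqnorm t (mat_apply t d R v) < real t * sqnorm d v / 2}"
  have "?Good = UNIV - (?Bad1 \<union> ?Bad2)"
    by (auto simp: not_le not_less) (meson linorder_not_le)
  then have "?p ?Good = 1 - ?p (?Bad1 \<union> ?Bad2)"
    using measure_pmf.prob_compl[of "?Bad1 \<union> ?Bad2" "rademacher_mat t d"] by simp
  moreover have "?p (?Bad1 \<union> ?Bad2) \<le> ?p ?Bad1 + ?p ?Bad2"
    by (rule measure_Un_le) simp_all
  moreover have "?p ?Bad1 \<le> 1/10"
    using prob_bilinear_ge_on_grid_net assms(1,2) .
  moreover have "?p ?Bad2 \<le> 1/10"
    using prob_some_mat_apply_contracts[OF assms(3), of t d] assms(4) by linarith
  ultimately show ?thesis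
    by linarith
qed

(* Since E |R v|^2 = t |v|^2, the factor sqrt (2 / t) makes G non-contracting on every v with
   |R v|^2 >= t |v|^2 / 2. *)
definition scaled_sign_matrix :: "nat \<Rightarrow> nat \<Rightarrow> (nat \<Rightarrow> nat \<Rightarrow> real) pmf" where
  "scaled_sign_matrix t d = map_pmf (\<lambda>R i j. sqrt (2 / real t) * R i j) (rademacher_mat t d)"

lemma sign_matrix_distortion_le:
  assumes "t \<ge> 1" "real d \<le> \<alpha>\<^sup>2 * real t" "\<alpha> \<ge> 1"
  shows "sqrt (2 / real t) * (4 * sqrt (736 * real (t + d))) \<le> 218 * \<alpha>"
proof (rule power2_le_imp_le)
  have "(sqrt (2 / real t) * (4 * sqrt (736 * real (t + d))))\<^sup>2 = 23552 * (1 + real d / real t)"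
    using assms(1) by (simp add: power_mult_distrib field_simps)
  also have "\<dots> \<le> 23552 * (2 * \<alpha>\<^sup>2)"
  proof -
    have "real d / real t \<le> \<alpha>\<^sup>2"
      using assms(1,2) by (simp add: divide_le_eq)
    then have "1 + real d / real t \<le> 2 * \<alpha>\<^sup>2"
      using one_le_power[OF assms(3), of 2] by linarith
    then show ?thesis
      by (rule mult_left_mono) simp
  qed
  also have "\<dots> \<le> (218 * \<alpha>)\<^sup>2"
    by (simp add: power_mult_distrib)
  finally show "(sqrt (2 / real t) * (4 * sqrt (736 * real (t + d))))\<^sup>2 \<le> (218 * \<alpha>)\<^sup>2" .
qed (use assms in simp)

lemma edist_scaled_mat_apply:
  assumes "c \<ge> 0"
  shows "edist t (mat_apply t d (\<lambda>i j. c * R i j) x) (mat_apply t d (\<lambda>i j. c * R i j) y)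
    = c * sqrt (sqnorm t (mat_apply t d R (\<lambda>j. x j - y j)))"
proof -
  have "edist t (mat_apply t d (\<lambda>i j. c * R i j) x) (mat_apply t d (\<lambda>i j. c * R i j) y)
      = sqrt (sqnorm t (mat_apply t d (\<lambda>i j. c * R i j) (\<lambda>j. x j - y j)))"
    by (rule edist_mat_apply)
  also have "\<dots> = sqrt (c\<^sup>2 * sqnorm t (mat_apply t d R (\<lambda>j. x j - y j)))"
    by (simp only: mat_apply_scale sqnorm_scale)
  finally show ?thesis
    using assms by (simp add: real_sqrt_mult)
qed

lemma edist_scaled_mat_apply_le_grid_net_bound:
  assumes net: "\<forall>y'\<in>grid_net t. \<forall>x'\<in>grid_net d. bilinear t d R y' x' < s" and "c \<ge> 0"
  shows "edist t (mat_apply t d (\<lambda>i j. c * R i j) x) (mat_apply t d (\<lambda>i j. c * R i j) y)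
    \<le> c * (4 * s) * edist d x y"
proof -
  have "sqrt (sqnorm t (mat_apply t d R (\<lambda>j. x j - y j)))
      \<le> sqrt ((4 * s)\<^sup>2 * sqnorm d (\<lambda>j. x j - y j))"
    using sqnorm_mat_apply_le_grid_net_bound[OF net] by (rule real_sqrt_le_mono)
  also have "\<dots> = 4 * s * edist d x y"
    using grid_net_bound_pos[OF net] by (simp add: real_sqrt_mult edist_eq_sqrt_sqnorm)
  finally show ?thesis
    unfolding edist_scaled_mat_apply[OF \<open>c \<ge> 0\<close>] mult.assoc by (rule mult_left_mono) fact
qed

lemma edist_le_scaled_mat_apply:
  assumes "t \<ge> 1"
    and "real t * sqnorm d (\<lambda>j. x j - y j) / 2 \<le> sqnorm t (mat_apply t d R (\<lambda>j. x j - y j))"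
  shows "edist d x y \<le> edist t (mat_apply t d (\<lambda>i j. sqrt (2 / real t) * R i j) x)
                                 (mat_apply t d (\<lambda>i j. sqrt (2 / real t) * R i j) y)"
proof -
  have "sqnorm d (\<lambda>j. x j - y j) \<le> 2 / real t * sqnorm t (mat_apply t d R (\<lambda>j. x j - y j))"
    using assms by (simp add: field_simps)
  then have "sqrt (sqnorm d (\<lambda>j. x j - y j))
      \<le> sqrt (2 / real t) * sqrt (sqnorm t (mat_apply t d R (\<lambda>j. x j - y j)))"
    by (metis real_sqrt_le_mono real_sqrt_mult)
  then show ?thesis
    by (simp add: edist_scaled_mat_apply edist_eq_sqrt_sqnorm[of d])
qed

lemma preserves_FPQ_scaled_sign_matrix_if_good:
  assumes P: "finite P" "P \<noteq> {}" and Q: "finite Q" "Q \<noteq> {}"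
    and p0: "p0 \<in> P" "FPQ d P Q = dist_set d p0 Q"
    and net: "\<forall>y\<in>grid_net t. \<forall>x\<in>grid_net d. bilinear t d R y x < sqrt (736 * real (t + d))"
    and noncontract: "\<forall>q\<in>Q. real t * sqnorm d (\<lambda>j. p0 j - q j) / 2
                                \<le> sqnorm t (mat_apply t d R (\<lambda>j. p0 j - q j))"
    and "t \<ge> 1" "real d \<le> \<alpha>\<^sup>2 * real t" "\<alpha> \<ge> 1" "\<beta> \<ge> 1" "218 * \<beta> * \<alpha> \<le> \<gamma>"
  shows "preserves_FPQ d t \<beta> \<gamma> P Q (mat_apply t d (\<lambda>i j. sqrt (2 / real t) * R i j))"
proof (rule preserves_FPQ_if_bounded_distortion[OF P Q _ p0])
  define B where "B = sqrt (2 / real t) * (4 * sqrt (736 * real (t + d)))"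
  show "\<forall>p\<in>P. \<forall>q\<in>Q. edist t (mat_apply t d (\<lambda>i j. sqrt (2 / real t) * R i j) p)
      (mat_apply t d (\<lambda>i j. sqrt (2 / real t) * R i j) q) \<le> B * edist d p q"
    unfolding B_def using edist_scaled_mat_apply_le_grid_net_bound[OF net] by simp
  show "\<forall>q\<in>Q. edist d p0 q \<le> edist t (mat_apply t d (\<lambda>i j. sqrt (2 / real t) * R i j) p0)
      (mat_apply t d (\<lambda>i j. sqrt (2 / real t) * R i j) q)"
    using edist_le_scaled_mat_apply[OF \<open>t \<ge> 1\<close>] noncontract by blast
  show "B \<ge> 0"
    by (simp add: B_def)
  have "B \<le> 218 * \<alpha>"
    using sign_matrix_distortion_le assms(9-11) by (simp add: B_def)
  then have "\<beta> * B \<le> \<beta> * (218 * \<alpha>)"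
    using \<open>\<beta> \<ge> 1\<close> by (intro mult_left_mono) auto
  then show "\<beta> * B \<le> \<gamma>"
    using \<open>218 * \<beta> * \<alpha> \<le> \<gamma>\<close> by (simp add: mult_ac)
  show "\<gamma> > 0"
    using assms(11-13) by (smt (verit) mult_pos_pos)
  show "\<beta> \<ge> 1"
    by fact
qed

lemma prob_preserves_FPQ:
  assumes P: "finite P" "P \<noteq> {}" and Q: "finite Q" "Q \<noteq> {}"
    and "t \<ge> 1" "d \<ge> 1" "real d \<le> \<alpha>\<^sup>2 * real t" "48 * ln (10 * real (card Q)) \<le> real t"
    and "\<alpha> \<ge> 1" "\<beta> \<ge> 1" "218 * \<beta> * \<alpha> \<le> \<gamma>"
  shows "4/5 \<le> measure_pmf.prob (scaled_sign_matrix t d)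
    {G. preserves_FPQ d t \<beta> \<gamma> P Q (mat_apply t d G)}"
proof -
  obtain p0 where p0: "p0 \<in> P" "FPQ d P Q = dist_set d p0 Q"
    using FPQ_attained[OF P] by blast
  define V where "V = (\<lambda>q j. p0 j - q j) ` Q"
  have "real (card V) * exp (- real t / 48) \<le> real (card Q) * exp (- ln (10 * real (card Q)))"
    using assms(8) card_image_le[OF \<open>finite Q\<close>, of "\<lambda>q j. p0 j - q j"]
    by (intro mult_mono) (auto simp: V_def)
  also have "\<dots> = 1/10"
    using Q by (simp add: exp_minus card_gt_0_iff)
  finally have "4/5 \<le> measure_pmf.prob (rademacher_mat t d)
    {R. (\<forall>y\<in>grid_net t. \<forall>x\<in>grid_net d. bilinear t d R y x < sqrt (736 * real (t + d))) \<and>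
        (\<forall>v\<in>V. real t * sqnorm d v / 2 \<le> sqnorm t (mat_apply t d R v))}"
    using assms(5,6) Q(1) by (intro prob_good_sign_matrix) (auto simp: V_def)
  also have "\<dots> \<le> measure_pmf.prob (rademacher_mat t d)
    {R. preserves_FPQ d t \<beta> \<gamma> P Q (mat_apply t d (\<lambda>i j. sqrt (2 / real t) * R i j))}"
    using preserves_FPQ_scaled_sign_matrix_if_good[OF P Q p0] assms(5,7,9-11)
    by (intro measure_pmf.finite_measure_mono) (auto simp: V_def)
  also have "\<dots> = measure_pmf.prob (scaled_sign_matrix t d)
      {G. preserves_FPQ d t \<beta> \<gamma> P Q (mat_apply t d G)}"
    by (simp add: scaled_sign_matrix_def vimage_def)
  finally show ?thesis .
qed

lemma target_dimension_bounds:
  fixes d k :: nat and \<alpha> :: real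
  assumes "k \<ge> 1" "\<alpha> > 0"
  defines "t \<equiv> nat \<lceil>48 * ln (10 * real k) + real d / \<alpha>\<^sup>2\<rceil>"
  shows "t \<ge> 1" and "real d \<le> \<alpha>\<^sup>2 * real t" and "48 * ln (10 * real k) \<le> real t"
    and "real t \<le> 500 * (1 + ln (real k) + real d / \<alpha>\<^sup>2)"
proof -
  have ln_k: "ln (10 * real k) = ln 10 + ln (real k)" "ln (real k) \<ge> 0"
    using assms(1) by (simp_all add: ln_mult)
  have ln_10: "0 < ln (10::real)" "ln (10::real) \<le> 9"
    using ln_le_minus_one[of 10] by simp_all
  have "real d / \<alpha>\<^sup>2 \<ge> 0"
    by simp
  then have t: "48 * ln (10 * real k) + real d / \<alpha>\<^sup>2 \<le> real t"
    "real t \<le> 48 * ln (10 * real k) + real d / \<alpha>\<^sup>2 + 1"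
    using ln_k ln_10 unfolding t_def by linarith+
  then show "t \<ge> 1"
    using ln_k ln_10 \<open>real d / \<alpha>\<^sup>2 \<ge> 0\<close> by linarith
  have "real d / \<alpha>\<^sup>2 \<le> real t"
    using t(1) ln_k ln_10 by linarith
  then show "real d \<le> \<alpha>\<^sup>2 * real t"
    using assms(2) by (simp add: pos_divide_le_eq mult.commute)
  show "48 * ln (10 * real k) \<le> real t"
    using t(1) \<open>real d / \<alpha>\<^sup>2 \<ge> 0\<close> by linarith
  show "real t \<le> 500 * (1 + ln (real k) + real d / \<alpha>\<^sup>2)"
    unfolding distrib_left using t(2) ln_k ln_10 \<open>real d / \<alpha>\<^sup>2 \<ge> 0\<close> by linarith
qed

theorem theoremC1:
  fixes \<beta> :: real
  assumes "\<beta> \<ge> 1"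
  shows "\<exists>C>0. \<forall>(d::nat) (\<alpha>::real) (k::nat) (n::nat).
    d > 1 \<and> \<alpha> > 1 \<and> 1 \<le> k \<and> k \<le> n \<longrightarrow>
    (\<exists>(t::nat) (M :: (nat \<Rightarrow> nat \<Rightarrow> real) measure).
       prob_space M \<and>
       real t \<le> C * (1 + ln (real k) + real d / \<alpha>\<^sup>2) \<and>
       (\<forall>P Q. finite P \<and> card P = n \<and> (\<forall>p\<in>P. in_dim d p) \<and>
              finite Q \<and> card Q = k \<and> (\<forall>q\<in>Q. in_dim d q) \<longrightarrow>
          measure M {G \<in> space M.
             estimation (C * \<alpha>) (FPQ d P Q)
               (FPQ t (mat_apply t d G ` P) (mat_apply t d G ` Q)) \<and>
             (\<forall>p\<in>P. approx_sol t \<beta> (mat_apply t d G ` P) (mat_apply t d G ` Q)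
                        (mat_apply t d G p)
                     \<longrightarrow> approx_sol d (C * \<alpha>) P Q p)} \<ge> 2/3))"
proof (intro exI[of _ "500 * \<beta>"] conjI allI impI)
  show "500 * \<beta> > 0"
    using assms by simp
  fix d :: nat and \<alpha> :: real and k n :: nat
  assume dakn: "d > 1 \<and> \<alpha> > 1 \<and> 1 \<le> k \<and> k \<le> n"
  define t where "t = nat \<lceil>48 * ln (10 * real k) + real d / \<alpha>\<^sup>2\<rceil>"
  have "k \<ge> 1" "\<alpha> > 0"
    using dakn by auto
  note t = target_dimension_bounds[OF this, of d, folded t_def]
  have dim: "real t \<le> 500 * \<beta> * (1 + ln (real k) + real d / \<alpha>\<^sup>2)"
    using t(4) mult_right_mono[OF assms, of "500 * (1 + ln (real k) + real d / \<alpha>\<^sup>2)"] dakn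
    by (simp add: mult_ac)
  have prob: "2/3 \<le> measure_pmf.prob (scaled_sign_matrix t d)
      {G. preserves_FPQ d t \<beta> (500 * \<beta> * \<alpha>) P Q (mat_apply t d G)}"
    if "finite P" "card P = n" "finite Q" "card Q = k" for P Q
  proof -
    have "P \<noteq> {}" "Q \<noteq> {}"
      using that dakn by auto
    then show ?thesis
      using prob_preserves_FPQ[of P Q t d \<alpha> \<beta> "500 * \<beta> * \<alpha>"] that dakn t assms by force
  qed
  show "\<exists>t M. prob_space M \<and> real t \<le> 500 * \<beta> * (1 + ln (real k) + real d / \<alpha>\<^sup>2) \<and>
       (\<forall>P Q. finite P \<and> card P = n \<and> (\<forall>p\<in>P. in_dim d p) \<and>
              finite Q \<and> card Q = k \<and> (\<forall>q\<in>Q. in_dim d q) \<longrightarrow>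
          measure M {G \<in> space M.
             estimation (500 * \<beta> * \<alpha>) (FPQ d P Q)
               (FPQ t (mat_apply t d G ` P) (mat_apply t d G ` Q)) \<and>
             (\<forall>p\<in>P. approx_sol t \<beta> (mat_apply t d G ` P) (mat_apply t d G ` Q)
                        (mat_apply t d G p)
                     \<longrightarrow> approx_sol d (500 * \<beta> * \<alpha>) P Q p)} \<ge> 2/3)"
    using dim prob
    by (intro exI[of _ t] exI[of _ "measure_pmf (scaled_sign_matrix t d)"] conjI allI impI
        prob_space_measure_pmf) (auto simp: preserves_FPQ_def)
qed

end
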